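(* Let $\mu$ be a cardinal with $\mu=\mu^{<\mu}$, let $\varepsilon<\mu$ be a limit ordinal, and let $P$ be a forcing notion satisfying $*^\varepsilon_\mu$. Then $P$ satisfies the $\mu^+$-chain condition.
   Context: A forcing notion is a quasi order $P$ with a minimal element $\emptyset_P$. Let $D$ be the filter on $\mu^+$ of sets $A$ such that for some club $E$ of $\mu^+$, every $i\in E$ of cofinality $\mu$ is in $A$; "$\forall^D i$" means "for all $i$ in some member of $D$". The game $*^\varepsilon_\mu[P]$ lasts $\varepsilon$ moves. In the $\zeta$-th move: Player I, if $\zeta\neq0$, chooses $\langle q^\zeta_i:i<\mu^+\rangle$ with $q^\zeta_i\in P$ such that for every $\xi<\zeta$, $(\forall^D i)\,p^\xi_i\le q^\zeta_i$, and chooses $f_\zeta:\mu^+\to\mu^+$ with $f_\zeta(i)<i$ for all $i$ in some club of $\mu^+$; if $\zeta=0$, $q^0_i=\emptyset_P$ for all $i$ and $f_0$ is identically $0$. Then Player II chooses $\langle p^\zeta_i:i<\mu^+\rangle$, $p^\zeta_i\in P$, with $(\forall^D i)\,q^\zeta_i\le p^\zeta_i$. Player I wins the play if (he always had a legal move and) there is $E\in D$ such that whenever $\mu<i<j<\mu^+$, $i,j\in E$, $\mathrm{cf}(i)=\mathrm{cf}(j)=\mu$ and $f_\xi(i)=f_\xi(j)$ for all $\xi<\varepsilon$, the set $\{p^\zeta_i:\zeta<\varepsilon\}\cup\{p^\zeta_j:\zeta<\varepsilon\}$ has an upper bound in $P$. $P$ satisfies $*^\varepsilon_\mu$ if Player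 I has a winning strategy in $*^\varepsilon_\mu[P]$. The $\mu^+$-chain condition means every antichain of $P$ has cardinality at most $\mu$. *)

theory Defs
  imports Main
begin

text \<open>Ordinals are represented as elements of the field of a well-order.
  Throughout, r is a well-order (later: cardSuc mu, i.e. mu^+), and
  "i < j" in r means (i,j) : r and i ~= j.\<close>

definition lt_in :: "'b rel \<Rightarrow> 'b \<Rightarrow> 'b \<Rightarrow> bool" where
  "lt_in r i j \<longleftrightarrow> (i, j) \<in> r \<and> i \<noteq> j"

definition club :: "'b rel \<Rightarrow> 'b set \<Rightarrow> bool" where
  "club r C \<longleftrightarrow>
     C \<subseteq> Field r \<and>
     (\<forall>i\<in>Field r. \<exists>j\<in>C. lt_in r i j) \<and>
     (\<forall>j\<in>Field r. (C \<inter> underS r j \<noteq> {} \<and>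
                     (\<forall>k\<in>underS r j. \<exists>c\<in>C \<inter> underS r j. lt_in r k c))
                    \<longrightarrow> j \<in> C)"

definition cof_eq :: "'b rel \<Rightarrow> 'b \<Rightarrow> 'c rel \<Rightarrow> bool" where
  "cof_eq r i k \<longleftrightarrow>
     (\<exists>A. A \<subseteq> underS r i \<and> (\<forall>x\<in>underS r i. \<exists>a\<in>A. (x, a) \<in> r)
          \<and> (card_of A, k) \<in> ordIso) \<and>
     (\<forall>A. A \<subseteq> underS r i \<and> (\<forall>x\<in>underS r i. \<exists>a\<in>A. (x, a) \<in> r)
          \<longrightarrow> (k, card_of A) \<in> ordLeq)"

definition inD :: "'b rel \<Rightarrow> 'c rel \<Rightarrow> 'b set \<Rightarrow> bool" where
  "inD r mu A \<longleftrightarrow> (\<exists>C. club r C \<and> (\<forall>i\<in>C. cof_eq r i mu \<longrightarrow> i \<in> A))"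

text \<open>The condition mu = mu^{<mu}: the set of functions from ordinals below mu to mu
  has cardinality mu.\<close>
definition lt_power_eq :: "'a rel \<Rightarrow> bool" where
  "lt_power_eq mu \<longleftrightarrow>
     (card_of (\<Union>\<alpha>\<in>Field mu. Func (underS mu \<alpha>) (Field mu)), mu) \<in> ordIso"

definition limit_in :: "'a rel \<Rightarrow> 'a \<Rightarrow> bool" where
  "limit_in mu e \<longleftrightarrow> e \<in> Field mu \<and> underS mu e \<noteq> {} \<and>
     (\<forall>z\<in>underS mu e. \<exists>z'\<in>underS mu e. lt_in mu z z')"

definition forcing_notion :: "'p set \<Rightarrow> ('p \<Rightarrow> 'p \<Rightarrow> bool) \<Rightarrow> 'p \<Rightarrow> bool" where
  "forcing_notion P le emp \<longleftrightarrow>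
     emp \<in> P \<and> (\<forall>p\<in>P. le p p) \<and>
     (\<forall>p\<in>P. \<forall>q\<in>P. \<forall>s\<in>P. le p q \<longrightarrow> le q s \<longrightarrow> le p s) \<and>
     (\<forall>p\<in>P. le emp p)"

text \<open>Moves are indexed by zeta in underS mu eps (ordinals below eps);
  the coordinates i range over Field (cardSuc mu) = mu^+.
  A strategy for Player I maps zeta and the history of Player II's moves p^xi (xi < zeta)
  to the move (q^zeta, f_zeta).\<close>

definition restr_hist ::
  "'a rel \<Rightarrow> 'a \<Rightarrow> ('a \<Rightarrow> 'a set \<Rightarrow> 'p) \<Rightarrow> ('a \<Rightarrow> 'a set \<Rightarrow> 'p)" where
  "restr_hist mu z p = (\<lambda>xi i. if xi \<in> underS mu z \<and> i \<in> Field (cardSuc mu)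
                                  then p xi i else undefined)"

definition winning_strategy_I ::
  "'a rel \<Rightarrow> 'a \<Rightarrow> 'p set \<Rightarrow> ('p \<Rightarrow> 'p \<Rightarrow> bool) \<Rightarrow> 'p \<Rightarrow>
   ('a \<Rightarrow> ('a \<Rightarrow> 'a set \<Rightarrow> 'p) \<Rightarrow> ('a set \<Rightarrow> 'p) \<times> ('a set \<Rightarrow> 'a set)) \<Rightarrow> bool" where
  "winning_strategy_I mu eps P le emp \<sigma> \<longleftrightarrow>
    (\<forall>p :: 'a \<Rightarrow> 'a set \<Rightarrow> 'p.
      let r = cardSuc mu;
          q = (\<lambda>z. fst (\<sigma> z (restr_hist mu z p)));
          f = (\<lambda>z. snd (\<sigma> z (restr_hist mu z p)));
          legalI = (\<lambda>z.
             (\<forall>i\<in>Field r. q z i \<in> P \<and> f z i \<in> Field r) \<and>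
             (underS mu z = {} \<longrightarrow>
                (\<forall>i\<in>Field r. q z i = emp \<and> underS r (f z i) = {})) \<and>
             (underS mu z \<noteq> {} \<longrightarrow>
                (\<forall>xi\<in>underS mu z. inD r mu {i. le (p xi i) (q z i)}) \<and>
                (\<exists>C. club r C \<and> (\<forall>i\<in>C. lt_in r (f z i) i))));
          legalII = (\<lambda>z.
             (\<forall>i\<in>Field r. p z i \<in> P) \<and> inD r mu {i. le (q z i) (p z i)})
      in (\<forall>z\<in>underS mu eps. (\<forall>xi\<in>underS mu z. legalII xi) \<longrightarrow> legalI z) \<and>
         ((\<forall>z\<in>underS mu eps. legalII z) \<longrightarrow>
            (\<exists>E. inD r mu E \<and>
               (\<forall>i\<in>E. \<forall>j\<in>E.
                  (mu, Restr r (underS r i)) \<in> ordLess \<and> lt_in r i j \<and>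
                  cof_eq r i mu \<and> cof_eq r j mu \<and>
                  (\<forall>xi\<in>underS mu eps. f xi i = f xi j)
                  \<longrightarrow> (\<exists>u\<in>P. \<forall>z\<in>underS mu eps. le (p z i) u \<and> le (p z j) u)))))"

definition satisfies_star :: "'a rel \<Rightarrow> 'a \<Rightarrow> 'p set \<Rightarrow> ('p \<Rightarrow> 'p \<Rightarrow> bool) \<Rightarrow> 'p \<Rightarrow> bool" where
  "satisfies_star mu eps P le emp \<longleftrightarrow> (\<exists>\<sigma>. winning_strategy_I mu eps P le emp \<sigma>)"

definition antichain :: "'p set \<Rightarrow> ('p \<Rightarrow> 'p \<Rightarrow> bool) \<Rightarrow> 'p set \<Rightarrow> bool" where
  "antichain P le A \<longleftrightarrow> A \<subseteq> P \<and>
     (\<forall>p\<in>A. \<forall>q\<in>A. p \<noteq> q \<longrightarrow> \<not> (\<exists>s\<in>P. le p s \<and> le q s))"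

definition succ_cc :: "'a rel \<Rightarrow> 'p set \<Rightarrow> ('p \<Rightarrow> 'p \<Rightarrow> bool) \<Rightarrow> bool" where
  "succ_cc mu P le \<longleftrightarrow> (\<forall>A. antichain P le A \<longrightarrow> (card_of A, mu) \<in> ordLeq)"

end

(*
  Suppose an antichain has size mu^+ and enumerate it as a_i (i < mu^+). Let Player II answer
  the first move with a and every later move q^zeta with q^zeta itself. Against this play the
  winning strategy yields functions f_xi (xi < eps), each regressive on a club, and a set E in D
  such that a_i and a_j are compatible whenever i < j in E have cofinality mu and all f_xi agree
  at i and j. Such a pair exists, contradicting that the a_i form an antichain.

  To find the pair, suppose the vectors (f_xi(j))_xi are pairwise distinct on the set S of
  good points. Then for each gamma only mu^(<mu) = mu points of S have their vector below gamma,
  so some h(gamma) < mu^+ bounds them. Since mu^(<mu) = mu makes mu regular (Koenig), there is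
  a point j of cofinality mu closed under h, in E and in the clubs of the f_xi. Its vector
  has |eps| < mu = cf(j) entries below j, hence is bounded by some x < j, and so
  j < h(x) < j.
*)
theory Submission
  imports Defs
begin

unbundle cardinal_syntax

lemma underS_iff_lt_in: "x \<in> underS r j \<longleftrightarrow> lt_in r x j"
  by (auto simp: underS_def lt_in_def)

lemma lt_in_Field: "lt_in r a b \<Longrightarrow> a \<in> Field r \<and> b \<in> Field r"
  by (auto simp: lt_in_def FieldI1 FieldI2)

lemma lt_in_trans:
  assumes "Well_order r" "lt_in r a b" "lt_in r b c" shows "lt_in r a c"
proof -
  have "trans r" "antisym r"
    using assms(1) by (auto simp: wo_rel_def wo_rel.TRANS wo_rel.ANTISYM)
  thus ?thesis using assms(2,3) unfolding lt_in_def trans_def antisym_def by blast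
qed

lemma le_lt_in_trans:
  assumes "Well_order r" "(a, b) \<in> r" "lt_in r b c" shows "lt_in r a c"
  using assms lt_in_trans[OF assms(1), of a b c] unfolding lt_in_def by blast

lemma lt_in_asym:
  assumes "Well_order r" "lt_in r a b" "(b, a) \<in> r" shows False
  using assms le_lt_in_trans[OF assms(1,3,2)] by (simp add: lt_in_def)

lemma not_lt_in_imp_le:
  assumes "Well_order r" "a \<in> Field r" "b \<in> Field r" "\<not> lt_in r a b" shows "(b, a) \<in> r"
proof -
  have "(a, b) \<in> r \<or> (b, a) \<in> r" using assms(1-3) by (simp add: wo_rel_def wo_rel.TOTALS)
  thus ?thesis using assms(2,4) unfolding lt_in_def by auto
qed

lemma lt_in_total:
  assumes "Well_order r" "a \<in> Field r" "b \<in> Field r" "a \<noteq> b" shows "lt_in r a b \<or> lt_in r b a"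
  using not_lt_in_imp_le[OF assms(1-3)] assms(4) by (auto simp: lt_in_def)

section \<open>Regularity and counting\<close>

lemma infinite_Field_if_limit_in:
  assumes mu: "Card_order mu" and lim: "limit_in mu eps"
  shows "infinite (Field mu)"
proof
  assume fin: "finite (Field mu)"
  have wo: "Well_order mu" using mu by (simp add: card_order_on_def)
  define S where "S = underS mu eps"
  define R where "R = {(z', z). z \<in> S \<and> z' \<in> S \<and> lt_in mu z z'}"
  have "R \<subseteq> Field mu \<times> Field mu"
    using Order_Relation.underS_Field[of mu eps] unfolding R_def S_def by blast
  hence "finite R" using finite_subset fin by blast
  moreover have "acyclic R"
  proof -
    have "trans R" using lt_in_trans[OF wo] unfolding R_def trans_def by blast
    hence "R\<^sup>+ = R" by (rule trancl_id)
    thus ?thesis unfolding acyclic_def R_def by (simp add: lt_in_def)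
  qed
  ultimately have "wf R" by (rule finite_acyclic_wf)
  moreover have "S \<noteq> {}" using lim by (simp add: limit_in_def S_def)
  ultimately obtain z where "z \<in> S" "\<And>z'. (z', z) \<in> R \<Longrightarrow> z' \<notin> S"
    using wfE_min by (metis ex_in_conv)
  thus False using lim unfolding limit_in_def R_def S_def by blast
qed

text \<open>Koenig's inequality mu < mu^(cf mu), with c enumerating a cofinal subset of mu.\<close>

lemma card_Func_cofinal_gt:
  assumes mu: "Card_order mu" and c: "c ` I \<subseteq> Field mu"
    and cof: "\<forall>\<beta>\<in>Field mu. \<exists>d\<in>I. lt_in mu \<beta> (c d)"
  shows "mu <o |Func I (Field mu)|"
proof (rule ccontr)
  have FI: "|Field mu| =o mu" using card_of_Field_ordIso[OF mu] .
  have wo: "Well_order mu" using mu by (simp add: card_order_on_def)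
  assume "\<not> mu <o |Func I (Field mu)|"
  hence "|Func I (Field mu)| \<le>o mu" using not_ordLess_iff_ordLeq[OF card_of_Well_order wo] by blast
  hence "|Func I (Field mu)| \<le>o |Field mu|"
    by (rule ordLeq_ordIso_trans[OF _ ordIso_symmetric[OF FI]])
  then obtain \<iota> where \<iota>: "inj_on \<iota> (Func I (Field mu))" "\<iota> ` Func I (Field mu) \<subseteq> Field mu"
    using card_of_ordLeq[of "Func I (Field mu)" "Field mu"] by blast
  define e where "e = inv_into (Func I (Field mu)) \<iota>"
  \<comment> \<open>diagonalise: h d avoids the values at d of all functions enumerated below c d\<close>
  define Z where "Z d = (\<lambda>\<beta>. e \<beta> d) ` underS mu (c d)" for d
  have "\<exists>y. y \<in> Field mu \<and> y \<notin> Z d" if d: "d \<in> I" for d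
  proof (rule ccontr)
    assume "\<not> (\<exists>y. y \<in> Field mu \<and> y \<notin> Z d)"
    hence "|Field mu| \<le>o |Z d|" by (intro card_of_mono1) blast
    also have "|Z d| \<le>o |underS mu (c d)|" unfolding Z_def by (rule card_of_image)
    also have "|underS mu (c d)| <o mu" using card_of_underS[OF mu] c d by blast
    also have "mu =o |Field mu|" using FI by (rule ordIso_symmetric)
    finally show False using ordLess_irreflexive by blast
  qed
  then obtain h where h: "\<And>d. d \<in> I \<Longrightarrow> h d \<in> Field mu \<and> h d \<notin> Z d"
    by (metis (full_types) someI_ex)
  define h' where "h' d = (if d \<in> I then h d else undefined)" for d
  have h'F: "h' \<in> Func I (Field mu)" using h unfolding Func_def h'_def by auto
  obtain d where d: "d \<in> I" "lt_in mu (\<iota> h') (c d)" using cof \<iota>(2) h'F by blast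
  have "e (\<iota> h') = h'" unfolding e_def using inv_into_f_f[OF \<iota>(1) h'F] .
  hence "h' d \<in> Z d" using d unfolding Z_def by (force simp: underS_iff_lt_in)
  thus False using h d(1) unfolding h'_def by simp
qed

lemma regularCard_if_lt_power_eq:
  assumes mu: "Card_order mu" and lp: "lt_power_eq mu"
  shows "regularCard mu"
  unfolding regularCard_def
proof (intro allI impI, elim conjE)
  fix K assume K: "K \<subseteq> Field mu" and cof: "cofinal K mu"
  have wo: "Well_order mu" using mu by (simp add: card_order_on_def)
  have "|K| \<le>o mu" using ordLeq_ordIso_trans[OF card_of_mono1[OF K] card_of_Field_ordIso[OF mu]] .
  moreover have "\<not> |K| <o mu"
  proof
    assume "|K| <o mu"
    then obtain \<alpha> where \<alpha>: "\<alpha> \<in> Field mu" and iso: "|K| =o Restr mu (underS mu \<alpha>)"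
      using ordLess_iff_ordIso_Restr[OF wo card_of_Well_order, THEN iffD1] by blast
    have "Field (Restr mu (underS mu \<alpha>)) = underS mu \<alpha>"
      using wo wo_rel.underS_ofilter Field_Restr_ofilter unfolding wo_rel_def by fastforce
    hence "|K| =o |underS mu \<alpha>|" using card_of_cong[OF iso] by (simp add: Field_card_of)
    then obtain c where c: "bij_betw c (underS mu \<alpha>) K"
      using card_of_ordIso[of "underS mu \<alpha>" K] ordIso_symmetric by blast
    have "\<forall>\<beta>\<in>Field mu. \<exists>d\<in>underS mu \<alpha>. lt_in mu \<beta> (c d)"
      using cof c unfolding cofinal_def bij_betw_def lt_in_def by blast
    moreover have "c ` underS mu \<alpha> \<subseteq> Field mu" using c K unfolding bij_betw_def by blast
    ultimately have "mu <o |Func (underS mu \<alpha>) (Field mu)|"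
      using card_Func_cofinal_gt[OF mu] by blast
    moreover have "|Func (underS mu \<alpha>) (Field mu)| \<le>o mu"
      using ordLeq_ordIso_trans[OF card_of_mono1 lp[unfolded lt_power_eq_def]] \<alpha> by blast
    ultimately show False using not_ordLess_ordLeq[of mu] by blast
  qed
  ultimately show "|K| =o mu" using ordLeq_iff_ordLess_or_ordIso[of "|K|" mu] by blast
qed

lemma bounded_if_regularCard:
  assumes k: "Card_order k" "infinite (Field k)" "regularCard k"
    and B: "B \<subseteq> Field k" "|B| <o k"
  shows "\<exists>x\<in>Field k. \<forall>b\<in>B. lt_in k b x"
proof -
  have wo: "wo_rel k" using k(1) by (simp add: card_order_on_def wo_rel_def)
  have "relChain k (underS k)"
    using underS_incr[OF wo_rel.TRANS[OF wo] wo_rel.ANTISYM[OF wo]] unfolding relChain_def by blast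
  moreover have "B \<subseteq> (\<Union>i\<in>Field k. underS k i)"
  proof
    fix b assume "b \<in> B"
    then obtain i where "i \<in> Field k" "b \<noteq> i" "(b, i) \<in> k"
      using infinite_Card_order_limit[OF k(1,2)] B(1) by blast
    thus "b \<in> (\<Union>i\<in>Field k. underS k i)" by (auto simp: underS_def)
  qed
  ultimately obtain x where "x \<in> Field k" "B \<subseteq> underS k x"
    using regularCard_UNION[OF k(1,3) _ _ B(2)] by blast
  thus ?thesis unfolding underS_iff_lt_in[symmetric] by blast
qed

lemma bounded_in_cardSuc:
  assumes mu: "Card_order mu" "infinite (Field mu)"
    and B: "B \<subseteq> Field (cardSuc mu)" "|B| \<le>o mu"
  shows "\<exists>x\<in>Field (cardSuc mu). \<forall>b\<in>B. lt_in (cardSuc mu) b x"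
proof (rule bounded_if_regularCard[OF cardSuc_Card_order[OF mu(1)] _ _ B(1)])
  show "infinite (Field (cardSuc mu))" using cardSuc_finite[OF mu(1)] mu(2) by simp
  show "regularCard (cardSuc mu)" using infinite_cardSuc_regularCard[OF mu(2,1)] .
  show "|B| <o cardSuc mu" using ordLeq_ordLess_trans[OF B(2) cardSuc_greater[OF mu(1)]] .
qed

lemma card_underS_cardSuc_ordLeq:
  assumes mu: "Card_order mu" and x: "x \<in> Field (cardSuc mu)"
  shows "|underS (cardSuc mu) x| \<le>o mu"
  using cardSuc_ordLeq_ordLess[OF mu card_of_Card_order, THEN iffD1]
    card_of_underS[OF cardSuc_Card_order[OF mu] x] .

lemma card_Func_underS_ordLeq:
  assumes mu: "Card_order mu" and lp: "lt_power_eq mu" and eps: "eps \<in> Field mu"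
    and B: "|B| \<le>o mu"
  shows "|Func (underS mu eps) B| \<le>o mu"
proof -
  have "|B| \<le>o |Field mu|"
    using ordLeq_ordIso_trans[OF B ordIso_symmetric[OF card_of_Field_ordIso[OF mu]]] .
  then obtain g where g: "inj_on g B" "g ` B \<subseteq> Field mu"
    using card_of_ordLeq[of B "Field mu"] by blast
  have "inj_on (Func_map (underS mu eps) g id) (Func (underS mu eps) B)"
  proof (rule inj_onI)
    fix h h' assume h: "h \<in> Func (underS mu eps) B" "h' \<in> Func (underS mu eps) B"
      and eq: "Func_map (underS mu eps) g id h = Func_map (underS mu eps) g id h'"
    show "h = h'"
    proof
      fix \<xi> show "h \<xi> = h' \<xi>"
      proof (cases "\<xi> \<in> underS mu eps")
        case True
        hence "g (h \<xi>) = g (h' \<xi>)" using fun_cong[OF eq, of \<xi>] by (simp add: Func_map_def)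
        thus ?thesis using inj_onD[OF g(1)] h True unfolding Func_def by blast
      next
        case False thus ?thesis using h unfolding Func_def by simp
      qed
    qed
  qed
  moreover have "Func_map (underS mu eps) g id ` Func (underS mu eps) B
                   \<subseteq> Func (underS mu eps) (Field mu)"
  proof (rule image_subsetI)
    fix h assume "h \<in> Func (underS mu eps) B"
    thus "Func_map (underS mu eps) g id h \<in> Func (underS mu eps) (Field mu)"
      by (rule Func_map[OF _ g(2)]) simp
  qed
  ultimately have "|Func (underS mu eps) B| \<le>o |Func (underS mu eps) (Field mu)|"
    using card_of_ordLeq[of "Func (underS mu eps) B" "Func (underS mu eps) (Field mu)"] by blast
  also have "|Func (underS mu eps) (Field mu)| \<le>o mu"
    using ordLeq_ordIso_trans[OF card_of_mono1 lp[unfolded lt_power_eq_def]] eps by blast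
  finally show ?thesis .
qed

section \<open>Clubs and closure points in mu^+\<close>

lemma card_insert_ordLeq:
  assumes r: "Card_order r" "infinite (Field r)" and A: "|A| \<le>o r"
  shows "|insert x A| \<le>o r"
proof -
  have "Field r \<noteq> {}" using r(2) by auto
  hence "|{x}| \<le>o r"
    using ordLeq_ordIso_trans[OF card_of_singl_ordLeq card_of_Field_ordIso[OF r(1)]] by simp
  hence "|{x} \<union> A| \<le>o r" using card_of_Un_ordLeq_infinite_Field[OF r(2) _ A r(1)] by blast
  thus ?thesis by simp
qed

lemma club_Field:
  assumes r: "Card_order r" "infinite (Field r)"
  shows "club r (Field r)"
  unfolding club_def
proof (intro conjI ballI impI)
  fix i assume "i \<in> Field r"
  then obtain j where "j \<in> Field r" "i \<noteq> j" "(i, j) \<in> r"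
    using infinite_Card_order_limit[OF r] by blast
  thus "\<exists>j\<in>Field r. lt_in r i j" by (auto simp: lt_in_def)
qed simp_all

lemma inD_if_Field_subset:
  assumes "Card_order r" "infinite (Field r)" "Field r \<subseteq> X"
  shows "inD r mu X"
  using club_Field[OF assms(1,2)] assms(3) unfolding inD_def by blast

lemma club_nonminimal:
  assumes r: "Card_order r" "infinite (Field r)"
  shows "club r {i \<in> Field r. underS r i \<noteq> {}}"
  unfolding club_def
proof (intro conjI ballI impI)
  fix i assume "i \<in> Field r"
  then obtain j where "j \<in> Field r" "i \<noteq> j" "(i, j) \<in> r"
    using infinite_Card_order_limit[OF r] by blast
  thus "\<exists>j\<in>{i \<in> Field r. underS r i \<noteq> {}}. lt_in r i j"
    by (auto simp: lt_in_def underS_def)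
qed blast+

lemma minimal_lt_in_nonminimal:
  assumes "Well_order r" "x \<in> Field r" "underS r x = {}" "i \<in> Field r" "underS r i \<noteq> {}"
  shows "lt_in r x i"
proof (rule ccontr)
  assume "\<not> lt_in r x i"
  hence "(i, x) \<in> r" using not_lt_in_imp_le[OF assms(1,2,4)] by blast
  moreover have "i \<noteq> x" using assms(3,5) by blast
  ultimately have "i \<in> underS r x" by (simp add: underS_def)
  thus False using assms(3) by simp
qed

definition club_next :: "'b rel \<Rightarrow> 'b set \<Rightarrow> 'b \<Rightarrow> 'b" where
  "club_next r C k = (SOME c. c \<in> C \<and> lt_in r k c)"

lemma club_next_mem:
  assumes "club r C" "k \<in> Field r"
  shows "club_next r C k \<in> C \<and> lt_in r k (club_next r C k)"
proof -
  have "\<exists>c. c \<in> C \<and> lt_in r k c" using assms unfolding club_def by blast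
  thus ?thesis unfolding club_next_def by (rule someI_ex)
qed

lemma mem_club_if_closed_under_next:
  assumes C: "club r C" and j: "j \<in> Field r" "underS r j \<noteq> {}"
    and closed: "\<forall>k. lt_in r k j \<longrightarrow> lt_in r (club_next r C k) j"
  shows "j \<in> C"
proof -
  have "\<exists>c\<in>C \<inter> underS r j. lt_in r k c" if "k \<in> underS r j" for k
  proof -
    have k: "lt_in r k j" using that by (simp add: underS_iff_lt_in)
    hence "club_next r C k \<in> C \<inter> underS r j" "lt_in r k (club_next r C k)"
      using club_next_mem[OF C] lt_in_Field[OF k] closed by (auto simp: underS_iff_lt_in)
    thus ?thesis by blast
  qed
  thus ?thesis using C j unfolding club_def by blast
qed

lemma cof_eq_bounded:
  assumes r: "Well_order r" and j: "cof_eq r j mu"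
    and V: "V \<subseteq> underS r j" "|V| <o mu"
  shows "\<exists>x. lt_in r x j \<and> (\<forall>v\<in>V. lt_in r v x)"
proof -
  have "\<not> (\<forall>x\<in>underS r j. \<exists>v\<in>V. (x, v) \<in> r)"
  proof
    assume "\<forall>x\<in>underS r j. \<exists>v\<in>V. (x, v) \<in> r"
    hence "mu \<le>o |V|" using j V(1) unfolding cof_eq_def by blast
    thus False using ordLeq_ordLess_trans[OF _ V(2)] ordLess_irreflexive by blast
  qed
  then obtain x where x: "lt_in r x j" and xV: "\<forall>v\<in>V. (x, v) \<notin> r"
    by (auto simp: underS_iff_lt_in)
  have "lt_in r v x" if v: "v \<in> V" for v
  proof (rule ccontr)
    have "v \<in> Field r" using V(1) v Order_Relation.underS_Field[of r j] by blast
    moreover assume "\<not> lt_in r v x"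
    ultimately have "(x, v) \<in> r" using not_lt_in_imp_le[OF r] lt_in_Field[OF x] by blast
    thus False using xV v by blast
  qed
  thus ?thesis using x by blast
qed

lemma exists_least_strict_bound:
  assumes r: "Well_order r" and A: "A \<subseteq> Field r" and x0: "x0 \<in> Field r" "\<forall>a\<in>A. lt_in r a x0"
  shows "\<exists>j\<in>Field r. (\<forall>a\<in>A. lt_in r a j) \<and> (\<forall>x. lt_in r x j \<longrightarrow> (\<exists>a\<in>A. (x, a) \<in> r))"
proof -
  define U where "U = {x \<in> Field r. \<forall>a\<in>A. lt_in r a x}"
  define j where "j = wo_rel.minim r U"
  have wo: "wo_rel r" using r by (simp add: wo_rel_def)
  have U: "U \<subseteq> Field r" "U \<noteq> {}" using x0 unfolding U_def by auto
  have jU: "j \<in> U" using wo_rel.minim_in[OF wo U] unfolding j_def .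
  have "\<exists>a\<in>A. (x, a) \<in> r" if x: "lt_in r x j" for x
  proof (rule ccontr)
    assume "\<not> (\<exists>a\<in>A. (x, a) \<in> r)"
    hence "x \<in> U"
      using not_lt_in_imp_le[OF r] lt_in_Field[OF x] A unfolding U_def by blast
    hence "(j, x) \<in> r" using wo_rel.minim_least[OF wo U(1)] unfolding j_def by blast
    thus False using lt_in_asym[OF r x] by blast
  qed
  thus ?thesis using jU unfolding U_def by blast
qed

lemma cof_eq_sup_of_increasing:
  assumes mu: "Card_order mu" "infinite (Field mu)" "regularCard mu" and r: "Well_order r"
    and incr: "\<And>\<alpha> \<beta>. lt_in mu \<beta> \<alpha> \<Longrightarrow> lt_in r (s \<beta>) (s \<alpha>)"
    and below: "\<And>\<alpha>. \<alpha> \<in> Field mu \<Longrightarrow> lt_in r (s \<alpha>) j"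
    and cofinal: "\<And>x. lt_in r x j \<Longrightarrow> \<exists>\<alpha>\<in>Field mu. (x, s \<alpha>) \<in> r"
  shows "cof_eq r j mu"
  unfolding cof_eq_def
proof (intro conjI allI impI)
  have wo: "Well_order mu" using mu(1) by (simp add: card_order_on_def)
  have "inj_on s (Field mu)"
  proof (rule inj_onI, rule ccontr)
    fix \<alpha> \<beta> assume "\<alpha> \<in> Field mu" "\<beta> \<in> Field mu" "s \<alpha> = s \<beta>" "\<alpha> \<noteq> \<beta>"
    thus False using lt_in_total[OF wo] incr by (metis lt_in_def)
  qed
  hence "|Field mu| =o |s ` Field mu|" using card_of_ordIso[THEN iffD1] inj_on_imp_bij_betw by blast
  hence "|s ` Field mu| =o mu"
    using ordIso_transitive[OF ordIso_symmetric card_of_Field_ordIso[OF mu(1)]] by blast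
  moreover have "s ` Field mu \<subseteq> underS r j" using below by (auto simp: underS_iff_lt_in)
  moreover have "\<forall>x\<in>underS r j. \<exists>a\<in>s ` Field mu. (x, a) \<in> r"
    using cofinal by (auto simp: underS_iff_lt_in)
  ultimately show "\<exists>A. A \<subseteq> underS r j \<and> (\<forall>x\<in>underS r j. \<exists>a\<in>A. (x, a) \<in> r) \<and> |A| =o mu"
    by blast
next
  fix A assume A: "A \<subseteq> underS r j \<and> (\<forall>x\<in>underS r j. \<exists>a\<in>A. (x, a) \<in> r)"
  have wo: "Well_order mu" using mu(1) by (simp add: card_order_on_def)
  show "mu \<le>o |A|"
  proof (rule ccontr)
    assume "\<not> mu \<le>o |A|"
    hence small: "|A| <o mu" using not_ordLeq_iff_ordLess[OF card_of_Well_order wo] by blast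
    have "\<forall>a\<in>A. \<exists>\<alpha>. \<alpha> \<in> Field mu \<and> (a, s \<alpha>) \<in> r"
      using A cofinal underS_iff_lt_in[of _ r j] by blast
    from bchoice[OF this] obtain \<beta> where \<beta>: "\<forall>a\<in>A. \<beta> a \<in> Field mu \<and> (a, s (\<beta> a)) \<in> r"
      by blast
    have "\<beta> ` A \<subseteq> Field mu" using \<beta> by blast
    moreover have "|\<beta> ` A| <o mu" using ordLeq_ordLess_trans[OF card_of_image small] .
    ultimately obtain \<gamma> where \<gamma>: "\<gamma> \<in> Field mu" "\<forall>b\<in>\<beta> ` A. lt_in mu b \<gamma>"
      using bounded_if_regularCard[OF mu] by blast
    have "s \<gamma> \<in> underS r j" using below[OF \<gamma>(1)] by (simp add: underS_iff_lt_in)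
    then obtain a where a: "a \<in> A" "(s \<gamma>, a) \<in> r" using A by blast
    have "lt_in r (s (\<beta> a)) (s \<gamma>)" using incr \<gamma>(2) a(1) by blast
    hence "lt_in r a (s \<gamma>)" using le_lt_in_trans[OF r] \<beta> a(1) by blast
    thus False using lt_in_asym[OF r _ a(2)] by blast
  qed
qed

lemma exists_increasing_above:
  assumes mu: "Card_order mu" "infinite (Field mu)"
    and b0: "b0 \<in> Field (cardSuc mu)" and Gx: "\<And>x. Gx x \<in> Field (cardSuc mu)"
  shows "\<exists>s. \<forall>\<alpha>. s \<alpha> \<in> Field (cardSuc mu) \<and> lt_in (cardSuc mu) b0 (s \<alpha>) \<and>
                 (\<forall>\<beta>. lt_in mu \<beta> \<alpha> \<longrightarrow> lt_in (cardSuc mu) (Gx (s \<beta>)) (s \<alpha>))"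
proof -
  let ?r = "cardSuc mu"
  let ?F = "Field ?r"
  have wo: "wo_rel mu" using mu(1) by (simp add: card_order_on_def wo_rel_def)
  define H where "H s \<alpha> =
    (SOME y. y \<in> ?F \<and> lt_in ?r b0 y \<and> (\<forall>\<beta>. lt_in mu \<beta> \<alpha> \<longrightarrow> lt_in ?r (Gx (s \<beta>)) y))" for s \<alpha>
  have "wo_rel.adm_wo mu H"
    unfolding wo_rel.adm_wo_def[OF wo] H_def
    by (intro allI impI arg_cong[where f = Eps]) (simp add: underS_iff_lt_in)
  hence "wo_rel.worec mu H = H (wo_rel.worec mu H)" by (rule wo_rel.worec_fixpoint[OF wo])
  then obtain s where s: "\<And>\<alpha>. s \<alpha> = H s \<alpha>" by metis
  have "s \<alpha> \<in> ?F \<and> lt_in ?r b0 (s \<alpha>) \<and> (\<forall>\<beta>. lt_in mu \<beta> \<alpha> \<longrightarrow> lt_in ?r (Gx (s \<beta>)) (s \<alpha>))" for \<alpha>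
  proof -
    define B where "B = insert b0 ((\<lambda>\<beta>. Gx (s \<beta>)) ` underS mu \<alpha>)"
    have "|underS mu \<alpha>| \<le>o mu"
      using ordLeq_ordIso_trans[OF card_of_mono1[OF Order_Relation.underS_Field]
          card_of_Field_ordIso[OF mu(1)]] .
    hence "|(\<lambda>\<beta>. Gx (s \<beta>)) ` underS mu \<alpha>| \<le>o mu" by (rule ordLeq_transitive[OF card_of_image])
    hence "|B| \<le>o mu" unfolding B_def by (rule card_insert_ordLeq[OF mu])
    moreover have "B \<subseteq> ?F" unfolding B_def using b0 Gx by blast
    ultimately obtain y where "y \<in> ?F" "\<forall>b\<in>B. lt_in ?r b y" using bounded_in_cardSuc[OF mu] by blast
    hence "\<exists>y. y \<in> ?F \<and> lt_in ?r b0 y \<and> (\<forall>\<beta>. lt_in mu \<beta> \<alpha> \<longrightarrow> lt_in ?r (Gx (s \<beta>)) y)"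
      unfolding B_def by (auto simp: underS_iff_lt_in[symmetric])
    from someI_ex[OF this] show ?thesis using s[of \<alpha>] unfolding H_def by simp
  qed
  thus ?thesis by blast
qed

lemma exists_bound_above_images:
  assumes mu: "Card_order mu" "infinite (Field mu)"
    and G: "|G| \<le>o mu" "\<forall>g\<in>G. \<forall>k\<in>Field (cardSuc mu). g k \<in> Field (cardSuc mu)"
    and x: "x \<in> Field (cardSuc mu)"
  shows "\<exists>y\<in>Field (cardSuc mu). lt_in (cardSuc mu) x y \<and>
           (\<forall>g\<in>G. \<forall>k. (k, x) \<in> cardSuc mu \<longrightarrow> lt_in (cardSuc mu) (g k) y)"
proof -
  let ?r = "cardSuc mu"
  define B where "B = insert x ((\<lambda>(g, k). g k) ` (G \<times> under ?r x))"
  have "under ?r x \<subseteq> insert x (underS ?r x)" by (auto simp: under_def underS_def)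
  moreover have "|insert x (underS ?r x)| \<le>o mu"
    using card_insert_ordLeq[OF mu card_underS_cardSuc_ordLeq[OF mu(1) x]] .
  ultimately have "|under ?r x| \<le>o mu" using ordLeq_transitive[OF card_of_mono1] by blast
  hence "|G \<times> under ?r x| \<le>o mu"
    using card_of_Times_ordLeq_infinite_Field[OF mu(2) G(1) _ mu(1)] by blast
  hence "|(\<lambda>(g, k). g k) ` (G \<times> under ?r x)| \<le>o mu" by (rule ordLeq_transitive[OF card_of_image])
  hence "|B| \<le>o mu" unfolding B_def by (rule card_insert_ordLeq[OF mu])
  moreover have "B \<subseteq> Field ?r" unfolding B_def using G(2) x by (auto simp: under_def intro: FieldI1)
  ultimately obtain y where "y \<in> Field ?r" "\<forall>b\<in>B. lt_in ?r b y"
    using bounded_in_cardSuc[OF mu] by blast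
  thus ?thesis unfolding B_def under_def by blast
qed

lemma exists_cof_sup_of_increasing:
  assumes mu: "Card_order mu" "infinite (Field mu)" "regularCard mu"
    and s: "s ` Field mu \<subseteq> Field (cardSuc mu)"
    and incr: "\<And>\<alpha> \<beta>. lt_in mu \<beta> \<alpha> \<Longrightarrow> lt_in (cardSuc mu) (s \<beta>) (s \<alpha>)"
  shows "\<exists>j\<in>Field (cardSuc mu). cof_eq (cardSuc mu) j mu \<and>
           (\<forall>\<alpha>\<in>Field mu. lt_in (cardSuc mu) (s \<alpha>) j) \<and>
           (\<forall>x. lt_in (cardSuc mu) x j \<longrightarrow> (\<exists>\<alpha>\<in>Field mu. (x, s \<alpha>) \<in> cardSuc mu))"
proof -
  let ?r = "cardSuc mu"
  have r: "Well_order ?r" using cardSuc_Card_order[OF mu(1)] by (simp add: card_order_on_def)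
  have "|s ` Field mu| \<le>o mu"
    using ordLeq_ordIso_trans[OF card_of_image card_of_Field_ordIso[OF mu(1)]] .
  from bounded_in_cardSuc[OF mu(1,2) s this] obtain x0
    where "x0 \<in> Field ?r" "\<forall>a\<in>s ` Field mu. lt_in ?r a x0" by blast
  from exists_least_strict_bound[OF r s this] obtain j where "j \<in> Field ?r"
    "\<forall>a\<in>s ` Field mu. lt_in ?r a j" "\<forall>x. lt_in ?r x j \<longrightarrow> (\<exists>a\<in>s ` Field mu. (x, a) \<in> ?r)"
    by blast
  hence j: "j \<in> Field ?r" "\<And>\<alpha>. \<alpha> \<in> Field mu \<Longrightarrow> lt_in ?r (s \<alpha>) j"
    and j_sup: "\<And>x. lt_in ?r x j \<Longrightarrow> \<exists>\<alpha>\<in>Field mu. (x, s \<alpha>) \<in> ?r"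
    by blast+
  have "cof_eq ?r j mu" using cof_eq_sup_of_increasing[of mu ?r s j, OF mu r incr j(2) j_sup] .
  thus ?thesis using j j_sup by blast
qed

lemma exists_closure_point:
  assumes mu: "Card_order mu" "infinite (Field mu)" "regularCard mu"
    and G: "|G| \<le>o mu" "\<forall>g\<in>G. \<forall>k\<in>Field (cardSuc mu). g k \<in> Field (cardSuc mu)"
    and b0: "b0 \<in> Field (cardSuc mu)"
  shows "\<exists>j\<in>Field (cardSuc mu). lt_in (cardSuc mu) b0 j \<and> cof_eq (cardSuc mu) j mu \<and>
           (\<forall>g\<in>G. \<forall>k. lt_in (cardSuc mu) k j \<longrightarrow> lt_in (cardSuc mu) (g k) j)"
proof -
  let ?r = "cardSuc mu"
  let ?F = "Field ?r"
  have r: "Well_order ?r" using cardSuc_Card_order[OF mu(1)] by (simp add: card_order_on_def)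
  define Gx where "Gx x = (SOME y. y \<in> ?F \<and> (x \<in> ?F \<longrightarrow> lt_in ?r x y \<and>
                 (\<forall>g\<in>G. \<forall>k. (k, x) \<in> ?r \<longrightarrow> lt_in ?r (g k) y)))" for x
  have "\<exists>y. y \<in> ?F \<and> (x \<in> ?F \<longrightarrow> lt_in ?r x y \<and>
                 (\<forall>g\<in>G. \<forall>k. (k, x) \<in> ?r \<longrightarrow> lt_in ?r (g k) y))" for x
    using exists_bound_above_images[OF mu(1,2) G, of x] b0 by (cases "x \<in> ?F") auto
  hence Gx: "Gx x \<in> ?F \<and> (x \<in> ?F \<longrightarrow>
      lt_in ?r x (Gx x) \<and> (\<forall>g\<in>G. \<forall>k. (k, x) \<in> ?r \<longrightarrow> lt_in ?r (g k) (Gx x)))" for x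
    unfolding Gx_def by (rule someI_ex)
  from exists_increasing_above[OF mu(1,2) b0, of Gx] Gx obtain s
    where s: "\<forall>\<alpha>. s \<alpha> \<in> ?F \<and> lt_in ?r b0 (s \<alpha>) \<and>
                   (\<forall>\<beta>. lt_in mu \<beta> \<alpha> \<longrightarrow> lt_in ?r (Gx (s \<beta>)) (s \<alpha>))"
    by blast
  hence sF: "\<And>\<alpha>. s \<alpha> \<in> ?F" and b0_s: "\<And>\<alpha>. lt_in ?r b0 (s \<alpha>)"
    and s_Gx: "\<And>\<alpha> \<beta>. lt_in mu \<beta> \<alpha> \<Longrightarrow> lt_in ?r (Gx (s \<beta>)) (s \<alpha>)"
    by blast+
  have incr: "lt_in ?r (s \<beta>) (s \<alpha>)" if "lt_in mu \<beta> \<alpha>" for \<alpha> \<beta>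
    using lt_in_trans[OF r conjunct1[OF Gx[of "s \<beta>", THEN conjunct2, THEN mp, OF sF]]
        s_Gx[OF that]] .
  have "s ` Field mu \<subseteq> ?F" using sF by blast
  from exists_cof_sup_of_increasing[OF mu this incr] obtain j
    where j: "j \<in> ?F" "cof_eq ?r j mu" "\<forall>\<alpha>\<in>Field mu. lt_in ?r (s \<alpha>) j"
      and j_sup: "\<forall>x. lt_in ?r x j \<longrightarrow> (\<exists>\<alpha>\<in>Field mu. (x, s \<alpha>) \<in> ?r)"
    by blast
  obtain \<alpha>0 where "\<alpha>0 \<in> Field mu" using mu(2) by fastforce
  hence "lt_in ?r b0 j" using lt_in_trans[OF r b0_s] j(3) by blast
  moreover have "lt_in ?r (g k) j" if g: "g \<in> G" and k: "lt_in ?r k j" for g k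
  proof -
    obtain \<alpha> where \<alpha>: "\<alpha> \<in> Field mu" "(k, s \<alpha>) \<in> ?r" using j_sup k by blast
    \<comment> \<open>the next term of the sequence lies above Gx (s \<alpha>), which bounds g k\<close>
    obtain \<alpha>' where \<alpha>': "\<alpha>' \<in> Field mu" "lt_in mu \<alpha> \<alpha>'"
      using infinite_Card_order_limit[OF mu(1,2) \<alpha>(1)] by (auto simp: lt_in_def)
    have "lt_in ?r (g k) (Gx (s \<alpha>))" using Gx[of "s \<alpha>"] sF g \<alpha>(2) by blast
    hence "lt_in ?r (g k) (s \<alpha>')" using lt_in_trans[OF r _ s_Gx[OF \<alpha>'(2)]] by blast
    thus ?thesis using lt_in_trans[OF r _ j(3)[rule_format, OF \<alpha>'(1)]] by blast
  qed
  ultimately show ?thesis using j(1,2) by blast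
qed

lemma exists_closure_point_in_clubs:
  assumes mu: "Card_order mu" "infinite (Field mu)" "regularCard mu"
    and clubs: "|\<C>| \<le>o mu" "\<forall>C\<in>\<C>. club (cardSuc mu) C"
    and h: "\<forall>k\<in>Field (cardSuc mu). h k \<in> Field (cardSuc mu)"
    and b0: "b0 \<in> Field (cardSuc mu)"
  shows "\<exists>j\<in>Field (cardSuc mu). lt_in (cardSuc mu) b0 j \<and> cof_eq (cardSuc mu) j mu \<and>
           (\<forall>C\<in>\<C>. j \<in> C) \<and> (\<forall>k. lt_in (cardSuc mu) k j \<longrightarrow> lt_in (cardSuc mu) (h k) j)"
proof -
  let ?r = "cardSuc mu"
  define G where "G = insert h (club_next ?r ` \<C>)"
  have "|G| \<le>o mu"
    unfolding G_def
    using card_insert_ordLeq[OF mu(1,2) ordLeq_transitive[OF card_of_image clubs(1)]] .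
  moreover have "\<forall>g\<in>G. \<forall>k\<in>Field ?r. g k \<in> Field ?r"
  proof (intro ballI)
    fix g k assume "g \<in> G" "k \<in> Field ?r"
    thus "g k \<in> Field ?r"
      unfolding G_def using h club_next_mem[of ?r _ k] clubs(2) lt_in_Field[of ?r k] by blast
  qed
  ultimately obtain j where j: "j \<in> Field ?r" "lt_in ?r b0 j" "cof_eq ?r j mu"
    and closed: "\<forall>g\<in>G. \<forall>k. lt_in ?r k j \<longrightarrow> lt_in ?r (g k) j"
    using exists_closure_point[OF mu _ _ b0] by blast
  have "underS ?r j \<noteq> {}" using j(2) by (auto simp: underS_iff_lt_in)
  hence "\<forall>C\<in>\<C>. j \<in> C"
    using mem_club_if_closed_under_next[of ?r _ j] clubs(2) j(1) closed unfolding G_def by blast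
  moreover have "\<forall>k. lt_in ?r k j \<longrightarrow> lt_in ?r (h k) j" using closed unfolding G_def by blast
  ultimately show ?thesis using j by blast
qed

lemma exists_threshold_above_mu:
  assumes mu: "Card_order mu"
  shows "\<exists>b\<in>Field (cardSuc mu). \<forall>j. lt_in (cardSuc mu) b j \<longrightarrow>
           mu <o Restr (cardSuc mu) (underS (cardSuc mu) j)"
proof -
  let ?r = "cardSuc mu"
  have r: "Well_order ?r" and wo: "Well_order mu"
    using cardSuc_Card_order[OF mu] mu by (simp_all add: card_order_on_def)
  obtain b where b: "b \<in> Field ?r" "mu =o Restr ?r (underS ?r b)"
    using ordLess_iff_ordIso_Restr[OF r wo, THEN iffD1, OF cardSuc_greater[OF mu]] by blast
  have "Restr ?r (underS ?r b) <o Restr ?r (underS ?r j)" if j: "lt_in ?r b j" for j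
  proof -
    have "underS ?r b \<subseteq> underS ?r j" using lt_in_trans[OF r _ j] by (auto simp: underS_iff_lt_in)
    moreover have "b \<in> underS ?r j - underS ?r b" using j by (simp add: underS_iff_lt_in lt_in_def)
    ultimately have "underS ?r b < underS ?r j" by blast
    moreover have "wo_rel.ofilter ?r (underS ?r x)" for x
      by (rule wo_rel.underS_ofilter) (simp add: wo_rel_def r)
    ultimately show ?thesis using ofilter_subset_ordLess[OF r] by blast
  qed
  thus ?thesis using b(1) ordIso_ordLess_trans[OF b(2)] by blast
qed

lemma card_traces_below_ordLeq:
  assumes mu: "Card_order mu" and lp: "lt_power_eq mu" and eps: "eps \<in> Field mu"
    and \<gamma>: "\<gamma> \<in> Field (cardSuc mu)"
    and traces_inj: "\<forall>i\<in>S. \<forall>j\<in>S. (\<forall>\<xi>\<in>underS mu eps. f \<xi> i = f \<xi> j) \<longrightarrow> i = j"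
  shows "|{j \<in> S. \<forall>\<xi>\<in>underS mu eps. lt_in (cardSuc mu) (f \<xi> j) \<gamma>}| \<le>o mu"
proof -
  let ?T = "{j \<in> S. \<forall>\<xi>\<in>underS mu eps. lt_in (cardSuc mu) (f \<xi> j) \<gamma>}"
  define trace where "trace j \<xi> = (if \<xi> \<in> underS mu eps then f \<xi> j else undefined)" for j \<xi>
  have "inj_on trace ?T"
  proof (rule inj_onI)
    fix i j assume ij: "i \<in> ?T" "j \<in> ?T" and eq: "trace i = trace j"
    have "f \<xi> i = f \<xi> j" if "\<xi> \<in> underS mu eps" for \<xi>
      using fun_cong[OF eq, of \<xi>] that by (simp add: trace_def)
    thus "i = j" using traces_inj ij by blast
  qed
  moreover have "trace ` ?T \<subseteq> Func (underS mu eps) (underS (cardSuc mu) \<gamma>)"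
    unfolding trace_def Func_def by (simp add: image_subset_iff underS_iff_lt_in)
  ultimately have "|?T| \<le>o |Func (underS mu eps) (underS (cardSuc mu) \<gamma>)|"
    using card_of_ordLeq[of ?T "Func (underS mu eps) (underS (cardSuc mu) \<gamma>)"] by blast
  also have "|Func (underS mu eps) (underS (cardSuc mu) \<gamma>)| \<le>o mu"
    using card_Func_underS_ordLeq[OF mu lp eps card_underS_cardSuc_ordLeq[OF mu \<gamma>]] .
  finally show ?thesis .
qed

lemma exists_closed_regressive_point:
  fixes f :: "'i \<Rightarrow> 'a set \<Rightarrow> 'a set"
  assumes mu: "Card_order mu" "infinite (Field mu)" "regularCard mu"
    and E: "inD (cardSuc mu) mu E" and Y: "|Y| \<le>o mu"
    and regressive: "\<forall>\<xi>\<in>Y. \<exists>C. club (cardSuc mu) C \<and> (\<forall>i\<in>C. lt_in (cardSuc mu) (f \<xi> i) i)"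
    and h: "\<forall>k\<in>Field (cardSuc mu). h k \<in> Field (cardSuc mu)"
  shows "\<exists>j\<in>Field (cardSuc mu). j \<in> E \<and> cof_eq (cardSuc mu) j mu \<and>
           mu <o Restr (cardSuc mu) (underS (cardSuc mu) j) \<and>
           (\<forall>\<xi>\<in>Y. lt_in (cardSuc mu) (f \<xi> j) j) \<and>
           (\<forall>k. lt_in (cardSuc mu) k j \<longrightarrow> lt_in (cardSuc mu) (h k) j)"
proof -
  let ?r = "cardSuc mu"
  obtain CE where CE: "club ?r CE" "\<forall>i\<in>CE. cof_eq ?r i mu \<longrightarrow> i \<in> E"
    using E unfolding inD_def by blast
  from bchoice[OF regressive] obtain cl
    where cl: "\<forall>\<xi>\<in>Y. club ?r (cl \<xi>) \<and> (\<forall>i\<in>cl \<xi>. lt_in ?r (f \<xi> i) i)" by blast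
  obtain b0 where b0: "b0 \<in> Field ?r"
    and above_mu: "\<And>j. lt_in ?r b0 j \<Longrightarrow> mu <o Restr ?r (underS ?r j)"
    using exists_threshold_above_mu[OF mu(1)] by blast
  have "|insert CE (cl ` Y)| \<le>o mu"
    using card_insert_ordLeq[OF mu(1,2) ordLeq_transitive[OF card_of_image Y]] .
  moreover have "\<forall>C\<in>insert CE (cl ` Y). club ?r C" using CE(1) cl by blast
  ultimately obtain j where j: "j \<in> Field ?r" "lt_in ?r b0 j" "cof_eq ?r j mu"
    and j_clubs: "\<forall>C\<in>insert CE (cl ` Y). j \<in> C"
    and j_closed: "\<forall>k. lt_in ?r k j \<longrightarrow> lt_in ?r (h k) j"
    using exists_closure_point_in_clubs[OF mu _ _ h b0] by blast
  have "\<forall>\<xi>\<in>Y. lt_in ?r (f \<xi> j) j" using cl j_clubs by blast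
  moreover have "j \<in> E" using CE(2) j_clubs j(3) by blast
  ultimately show ?thesis using j above_mu[OF j(2)] j_closed by blast
qed

lemma exists_pair_with_equal_regressive_values:
  fixes f :: "'a \<Rightarrow> 'a set \<Rightarrow> 'a set"
  assumes mu: "Card_order mu" "infinite (Field mu)" and lp: "lt_power_eq mu"
    and eps: "eps \<in> Field mu" and E: "inD (cardSuc mu) mu E"
    and regressive: "\<forall>\<xi>\<in>underS mu eps. \<exists>C. club (cardSuc mu) C \<and>
                       (\<forall>i\<in>C. lt_in (cardSuc mu) (f \<xi> i) i)"
  shows "\<exists>i\<in>E. \<exists>j\<in>E. mu <o Restr (cardSuc mu) (underS (cardSuc mu) i) \<and>
           lt_in (cardSuc mu) i j \<and> cof_eq (cardSuc mu) i mu \<and> cof_eq (cardSuc mu) j mu \<and>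
           (\<forall>\<xi>\<in>underS mu eps. f \<xi> i = f \<xi> j)"
proof (rule ccontr)
  let ?r = "cardSuc mu"
  let ?F = "Field ?r"
  let ?Y = "underS mu eps"
  have r: "Well_order ?r" using cardSuc_Card_order[OF mu(1)] by (simp add: card_order_on_def)
  define S where "S = {j \<in> ?F. j \<in> E \<and> cof_eq ?r j mu \<and> mu <o Restr ?r (underS ?r j) \<and>
                                (\<forall>\<xi>\<in>?Y. lt_in ?r (f \<xi> j) j)}"
  define T where "T \<gamma> = {j \<in> S. \<forall>\<xi>\<in>?Y. lt_in ?r (f \<xi> j) \<gamma>}" for \<gamma>
  assume no_pair: "\<not> ?thesis"
  have traces_inj: "\<forall>i\<in>S. \<forall>j\<in>S. (\<forall>\<xi>\<in>?Y. f \<xi> i = f \<xi> j) \<longrightarrow> i = j"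
  proof (intro ballI impI, rule ccontr)
    fix i j assume ij: "i \<in> S" "j \<in> S" "\<forall>\<xi>\<in>?Y. f \<xi> i = f \<xi> j" "i \<noteq> j"
    hence "lt_in ?r i j \<or> lt_in ?r j i" using lt_in_total[OF r] unfolding S_def by blast
    moreover have "\<forall>\<xi>\<in>?Y. f \<xi> j = f \<xi> i" using ij(3) by simp
    ultimately show False using no_pair ij(1-3) unfolding S_def by blast
  qed
  define h where "h \<gamma> = (SOME x. x \<in> ?F \<and> (\<forall>j\<in>T \<gamma>. lt_in ?r j x))" for \<gamma>
  have h: "h \<gamma> \<in> ?F \<and> (\<forall>j\<in>T \<gamma>. lt_in ?r j (h \<gamma>))" if \<gamma>: "\<gamma> \<in> ?F" for \<gamma>
  proof -
    have "T \<gamma> \<subseteq> ?F" unfolding T_def S_def by blast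
    moreover have "|T \<gamma>| \<le>o mu"
      unfolding T_def by (rule card_traces_below_ordLeq[OF mu(1) lp eps \<gamma> traces_inj])
    ultimately have "\<exists>x\<in>?F. \<forall>j\<in>T \<gamma>. lt_in ?r j x" by (rule bounded_in_cardSuc[OF mu])
    hence "\<exists>x. x \<in> ?F \<and> (\<forall>j\<in>T \<gamma>. lt_in ?r j x)" by blast
    from someI_ex[OF this] show ?thesis unfolding h_def .
  qed
  have small_Y: "|?Y| <o mu" using card_of_underS[OF mu(1) eps] .
  have "\<forall>k\<in>?F. h k \<in> ?F" using h by blast
  from exists_closed_regressive_point[OF mu regularCard_if_lt_power_eq[OF mu(1) lp] E
      ordLess_imp_ordLeq[OF small_Y] regressive this]
  obtain j where jF: "j \<in> ?F" and jS: "j \<in> E \<and> cof_eq ?r j mu \<and>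
      mu <o Restr ?r (underS ?r j) \<and> (\<forall>\<xi>\<in>?Y. lt_in ?r (f \<xi> j) j)"
    and j_closed: "\<forall>k. lt_in ?r k j \<longrightarrow> lt_in ?r (h k) j"
    by blast
  have "(\<lambda>\<xi>. f \<xi> j) ` ?Y \<subseteq> underS ?r j" using jS by (auto simp: underS_iff_lt_in)
  from cof_eq_bounded[OF r conjunct1[OF conjunct2[OF jS]] this
      ordLeq_ordLess_trans[OF card_of_image small_Y]]
  obtain x where x: "lt_in ?r x j" "\<forall>v\<in>(\<lambda>\<xi>. f \<xi> j) ` ?Y. lt_in ?r v x"
    by blast
  have "j \<in> T x" unfolding T_def S_def using jF jS x(2) by blast
  hence "lt_in ?r j (h x)" using h[OF conjunct1[OF lt_in_Field[OF x(1)]]] by blast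
  moreover have "lt_in ?r (h x) j" using j_closed x(1) by blast
  ultimately have "lt_in ?r j j" by (rule lt_in_trans[OF r])
  thus False by (simp add: lt_in_def)
qed

section \<open>Playing against a winning strategy\<close>

type_synonym ('a, 'p) player_I_strategy =
  "'a \<Rightarrow> ('a \<Rightarrow> 'a set \<Rightarrow> 'p) \<Rightarrow> ('a set \<Rightarrow> 'p) \<times> ('a set \<Rightarrow> 'a set)"

abbreviation strategy_q ::
  "'a rel \<Rightarrow> ('a, 'p) player_I_strategy \<Rightarrow>
   ('a \<Rightarrow> 'a set \<Rightarrow> 'p) \<Rightarrow> 'a \<Rightarrow> 'a set \<Rightarrow> 'p" where
  "strategy_q mu \<sigma> p z \<equiv> fst (\<sigma> z (restr_hist mu z p))"

abbreviation strategy_f ::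
  "'a rel \<Rightarrow> ('a, 'p) player_I_strategy \<Rightarrow>
   ('a \<Rightarrow> 'a set \<Rightarrow> 'p) \<Rightarrow> 'a \<Rightarrow> 'a set \<Rightarrow> 'a set" where
  "strategy_f mu \<sigma> p z \<equiv> snd (\<sigma> z (restr_hist mu z p))"

abbreviation legal_II ::
  "'a rel \<Rightarrow> 'p set \<Rightarrow> ('p \<Rightarrow> 'p \<Rightarrow> bool) \<Rightarrow>
   ('a, 'p) player_I_strategy \<Rightarrow>
   ('a \<Rightarrow> 'a set \<Rightarrow> 'p) \<Rightarrow> 'a \<Rightarrow> bool" where
  "legal_II mu P le \<sigma> p z \<equiv> (\<forall>i\<in>Field (cardSuc mu). p z i \<in> P) \<and>
     inD (cardSuc mu) mu {i. le (strategy_q mu \<sigma> p z i) (p z i)}"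

lemma winning_strategy_I_legal:
  assumes "winning_strategy_I mu eps P le emp \<sigma>" "z \<in> underS mu eps"
    and "\<forall>\<xi>\<in>underS mu z. legal_II mu P le \<sigma> p \<xi>"
  shows "\<forall>i\<in>Field (cardSuc mu). strategy_q mu \<sigma> p z i \<in> P \<and>
           strategy_f mu \<sigma> p z i \<in> Field (cardSuc mu)"
    and "underS mu z = {} \<Longrightarrow> \<forall>i\<in>Field (cardSuc mu). strategy_q mu \<sigma> p z i = emp \<and>
           underS (cardSuc mu) (strategy_f mu \<sigma> p z i) = {}"
    and "underS mu z \<noteq> {} \<Longrightarrow> \<exists>C. club (cardSuc mu) C \<and>
           (\<forall>i\<in>C. lt_in (cardSuc mu) (strategy_f mu \<sigma> p z i) i)"
  using assms(1)[unfolded winning_strategy_I_def Let_def, THEN spec[of _ p], THEN conjunct1,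
      THEN bspec[OF _ assms(2)], THEN mp[OF _ assms(3)]]
  by blast+

lemma winning_strategy_I_wins:
  assumes "winning_strategy_I mu eps P le emp \<sigma>"
    and "\<forall>z\<in>underS mu eps. legal_II mu P le \<sigma> p z"
  shows "\<exists>E. inD (cardSuc mu) mu E \<and>
           (\<forall>i\<in>E. \<forall>j\<in>E.
              mu <o Restr (cardSuc mu) (underS (cardSuc mu) i) \<and> lt_in (cardSuc mu) i j \<and>
              cof_eq (cardSuc mu) i mu \<and> cof_eq (cardSuc mu) j mu \<and>
              (\<forall>\<xi>\<in>underS mu eps. strategy_f mu \<sigma> p \<xi> i = strategy_f mu \<sigma> p \<xi> j)
              \<longrightarrow> (\<exists>u\<in>P. \<forall>z\<in>underS mu eps. le (p z i) u \<and> le (p z j) u))"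
  using assms(1)[unfolded winning_strategy_I_def Let_def, THEN spec[of _ p], THEN conjunct2,
      THEN mp[OF _ assms(2)]] .

definition counterplay ::
  "'a rel \<Rightarrow> ('a, 'p) player_I_strategy \<Rightarrow>
   ('a set \<Rightarrow> 'p) \<Rightarrow> 'a \<Rightarrow> 'a set \<Rightarrow> 'p" where
  "counterplay mu \<sigma> a =
     wo_rel.worec mu (\<lambda>p z. if underS mu z = {} then a else strategy_q mu \<sigma> p z)"

lemma counterplay_eq:
  fixes a :: "'a set \<Rightarrow> 'p"
  assumes "Well_order mu"
  shows "counterplay mu \<sigma> a z =
           (if underS mu z = {} then a else strategy_q mu \<sigma> (counterplay mu \<sigma> a) z)"
proof -
  have wo: "wo_rel mu" using assms by (simp add: wo_rel_def)
  have "wo_rel.adm_wo mu (\<lambda>p z. if underS mu z = {} then a else strategy_q mu \<sigma> p z)"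
  proof (unfold wo_rel.adm_wo_def[OF wo], intro allI impI)
    fix p p' :: "'a \<Rightarrow> 'a set \<Rightarrow> 'p" and z assume "\<forall>y\<in>underS mu z. p y = p' y"
    hence "restr_hist mu z p = restr_hist mu z p'"
      unfolding restr_hist_def by (simp add: fun_eq_iff)
    thus "(if underS mu z = {} then a else strategy_q mu \<sigma> p z) =
          (if underS mu z = {} then a else strategy_q mu \<sigma> p' z)" by simp
  qed
  from wo_rel.worec_fixpoint[OF wo this] show ?thesis
    unfolding counterplay_def by (simp add: fun_eq_iff)
qed

lemma counterplay_legal_step:
  fixes a :: "'a set \<Rightarrow> 'p"
  assumes mu: "Card_order mu" "infinite (Field mu)" and fn: "forcing_notion P le emp"
    and ws: "winning_strategy_I mu eps P le emp \<sigma>" and a: "\<forall>i\<in>Field (cardSuc mu). a i \<in> P"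
    and z: "z \<in> underS mu eps"
    and earlier: "\<forall>\<xi>\<in>underS mu z. legal_II mu P le \<sigma> (counterplay mu \<sigma> a) \<xi>"
  shows "legal_II mu P le \<sigma> (counterplay mu \<sigma> a) z"
proof -
  let ?p = "counterplay mu \<sigma> a"
  let ?r = "cardSuc mu"
  have wo: "Well_order mu" using mu(1) by (simp add: card_order_on_def)
  have r: "Card_order ?r" "infinite (Field ?r)"
    using cardSuc_Card_order[OF mu(1)] cardSuc_finite[OF mu(1)] mu(2) by auto
  have refl: "\<And>p. p \<in> P \<Longrightarrow> le p p" and bot: "\<And>p. p \<in> P \<Longrightarrow> le emp p"
    using fn unfolding forcing_notion_def by blast+
  note legal_I = winning_strategy_I_legal[OF ws z earlier]
  have pz: "?p z = (if underS mu z = {} then a else strategy_q mu \<sigma> ?p z)"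
    by (rule counterplay_eq[OF wo])
  have move: "?p z i \<in> P \<and> le (strategy_q mu \<sigma> ?p z i) (?p z i)" if i: "i \<in> Field ?r" for i
  proof (cases "underS mu z = {}")
    case True
    thus ?thesis using legal_I(2)[OF True] a bot i pz by simp
  next
    case False
    thus ?thesis using legal_I(1) refl i pz by simp
  qed
  hence "inD ?r mu {i. le (strategy_q mu \<sigma> ?p z i) (?p z i)}"
    by (intro inD_if_Field_subset[OF r]) blast
  thus ?thesis using move by blast
qed

lemma counterplay_legal:
  fixes a :: "'a set \<Rightarrow> 'p"
  assumes mu: "Card_order mu" "infinite (Field mu)" and fn: "forcing_notion P le emp"
    and ws: "winning_strategy_I mu eps P le emp \<sigma>" and a: "\<forall>i\<in>Field (cardSuc mu). a i \<in> P"
  shows "\<forall>z\<in>underS mu eps. legal_II mu P le \<sigma> (counterplay mu \<sigma> a) z"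
proof -
  have wo: "Well_order mu" using mu(1) by (simp add: card_order_on_def)
  have "z \<in> underS mu eps \<longrightarrow> legal_II mu P le \<sigma> (counterplay mu \<sigma> a) z" for z
  proof (induction z rule: wo_rel.well_order_induct[OF wo[folded wo_rel_def]])
    case (1 z)
    show ?case
    proof
      assume z: "z \<in> underS mu eps"
      have "\<xi> \<in> underS mu eps" if "\<xi> \<in> underS mu z" for \<xi>
        using lt_in_trans[OF wo] that z by (simp add: underS_iff_lt_in)
      hence "\<forall>\<xi>\<in>underS mu z. legal_II mu P le \<sigma> (counterplay mu \<sigma> a) \<xi>"
        using 1 by (auto simp: underS_def)
      thus "legal_II mu P le \<sigma> (counterplay mu \<sigma> a) z"
        by (rule counterplay_legal_step[OF assms z])
    qed
  qed
  thus ?thesis by blast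
qed

lemma counterplay_regressive:
  fixes a :: "'a set \<Rightarrow> 'p"
  assumes mu: "Card_order mu" "infinite (Field mu)" and fn: "forcing_notion P le emp"
    and ws: "winning_strategy_I mu eps P le emp \<sigma>" and a: "\<forall>i\<in>Field (cardSuc mu). a i \<in> P"
  shows "\<forall>\<xi>\<in>underS mu eps. \<exists>C. club (cardSuc mu) C \<and>
           (\<forall>i\<in>C. lt_in (cardSuc mu) (strategy_f mu \<sigma> (counterplay mu \<sigma> a) \<xi> i) i)"
proof
  let ?f = "strategy_f mu \<sigma> (counterplay mu \<sigma> a)"
  let ?r = "cardSuc mu"
  fix \<xi> assume \<xi>: "\<xi> \<in> underS mu eps"
  have legal: "\<forall>z\<in>underS mu \<xi>. legal_II mu P le \<sigma> (counterplay mu \<sigma> a) z"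
    using counterplay_legal[OF assms] \<xi> lt_in_trans[OF card_order_on_well_order_on[OF mu(1)]]
    by (auto simp: underS_iff_lt_in)
  note legal_I = winning_strategy_I_legal[OF ws \<xi> legal]
  show "\<exists>C. club ?r C \<and> (\<forall>i\<in>C. lt_in ?r (?f \<xi> i) i)"
  proof (cases "underS mu \<xi> = {}")
    case True
    have r: "Card_order ?r" "infinite (Field ?r)"
      using cardSuc_Card_order[OF mu(1)] cardSuc_finite[OF mu(1)] mu(2) by auto
    have "lt_in ?r (?f \<xi> i) i" if "i \<in> Field ?r" "underS ?r i \<noteq> {}" for i
      using minimal_lt_in_nonminimal[OF card_order_on_well_order_on[OF r(1)]]
        legal_I(1) legal_I(2)[OF True] that
      by blast
    thus ?thesis using club_nonminimal[OF r] by blast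
  next
    case False
    thus ?thesis using legal_I(3) by blast
  qed
qed

lemma exists_minimal_in_underS:
  assumes wo: "Well_order mu" and ne: "underS mu eps \<noteq> {}"
  obtains z where "z \<in> underS mu eps" "underS mu z = {}"
proof -
  have "wf (mu - Id)" using wo by (simp add: wo_rel_def wo_rel.WF)
  then obtain z where z: "z \<in> underS mu eps" and min: "\<And>y. (y, z) \<in> mu - Id \<Longrightarrow> y \<notin> underS mu eps"
    using wfE_min ne by (metis ex_in_conv)
  have "underS mu z = {}"
  proof (rule ccontr)
    assume "underS mu z \<noteq> {}"
    then obtain y where y: "lt_in mu y z" by (auto simp: underS_iff_lt_in)
    hence "y \<in> underS mu eps" using lt_in_trans[OF wo y] z by (simp add: underS_iff_lt_in)
    thus False using min y by (auto simp: lt_in_def)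
  qed
  thus thesis using that z by blast
qed

lemma compatible_pair_if_satisfies_star:
  fixes a :: "'a set \<Rightarrow> 'p"
  assumes mu: "Card_order mu" and lp: "lt_power_eq mu" and lim: "limit_in mu eps"
    and fn: "forcing_notion P le emp" and star: "satisfies_star mu eps P le emp"
    and a: "\<forall>i\<in>Field (cardSuc mu). a i \<in> P"
  shows "\<exists>i\<in>Field (cardSuc mu). \<exists>j\<in>Field (cardSuc mu). i \<noteq> j \<and> (\<exists>u\<in>P. le (a i) u \<and> le (a j) u)"
proof -
  have muinf: "infinite (Field mu)" using infinite_Field_if_limit_in[OF mu lim] .
  have wo: "Well_order mu" using mu by (simp add: card_order_on_def)
  obtain \<sigma> where ws: "winning_strategy_I mu eps P le emp \<sigma>"
    using star unfolding satisfies_star_def by blast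
  let ?p = "counterplay mu \<sigma> a"
  from winning_strategy_I_wins[OF ws counterplay_legal[OF mu muinf fn ws a]]
  obtain E where E: "inD (cardSuc mu) mu E" and wins: "\<forall>i\<in>E. \<forall>j\<in>E.
      mu <o Restr (cardSuc mu) (underS (cardSuc mu) i) \<and> lt_in (cardSuc mu) i j \<and>
      cof_eq (cardSuc mu) i mu \<and> cof_eq (cardSuc mu) j mu \<and>
      (\<forall>\<xi>\<in>underS mu eps. strategy_f mu \<sigma> ?p \<xi> i = strategy_f mu \<sigma> ?p \<xi> j)
      \<longrightarrow> (\<exists>u\<in>P. \<forall>z\<in>underS mu eps. le (?p z i) u \<and> le (?p z j) u)"
    by blast
  have eps: "eps \<in> Field mu" using lim by (simp add: limit_in_def)
  obtain i j where "i \<in> E" "j \<in> E" and ij: "lt_in (cardSuc mu) i j"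
    and "mu <o Restr (cardSuc mu) (underS (cardSuc mu) i)"
      "cof_eq (cardSuc mu) i mu" "cof_eq (cardSuc mu) j mu"
      "\<forall>\<xi>\<in>underS mu eps. strategy_f mu \<sigma> ?p \<xi> i = strategy_f mu \<sigma> ?p \<xi> j"
    using exists_pair_with_equal_regressive_values[OF mu muinf lp eps E
        counterplay_regressive[OF mu muinf fn ws a]] by blast
  with wins obtain u where u: "u \<in> P" "\<forall>z\<in>underS mu eps. le (?p z i) u \<and> le (?p z j) u"
    by blast
  obtain z0 where z0: "z0 \<in> underS mu eps" "underS mu z0 = {}"
    using exists_minimal_in_underS[OF wo] lim unfolding limit_in_def by blast
  have "?p z0 = a" using z0(2) by (simp add: counterplay_eq[OF wo])
  hence "le (a i) u" "le (a j) u" using u(2) z0(1) by auto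
  moreover have "i \<noteq> j" using ij by (simp add: lt_in_def)
  ultimately show ?thesis using lt_in_Field[OF ij] u(1) by blast
qed

theorem claim1p3:
  fixes mu :: "'a rel" and eps :: 'a
    and P :: "'p set" and le :: "'p \<Rightarrow> 'p \<Rightarrow> bool" and emp :: 'p
  assumes "Card_order mu"
    and "lt_power_eq mu"
    and "limit_in mu eps"
    and "forcing_notion P le emp"
    and "satisfies_star mu eps P le emp"
  shows "succ_cc mu P le"
  unfolding succ_cc_def
proof (intro allI impI)
  fix A assume A: "antichain P le A"
  show "|A| \<le>o mu"
  proof (rule ccontr)
    assume "\<not> |A| \<le>o mu"
    hence "mu <o |A|"
      using not_ordLeq_iff_ordLess[OF card_order_on_well_order_on[OF assms(1)] card_of_Well_order]
      by blast
    hence "|Field (cardSuc mu)| \<le>o |A|"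
      using ordIso_ordLeq_trans[OF card_of_Field_ordIso[OF cardSuc_Card_order[OF assms(1)]]
          cardSuc_ordLess_ordLeq[OF assms(1) card_of_Card_order, THEN iffD1]] by blast
    then obtain a where a: "inj_on a (Field (cardSuc mu))" "a ` Field (cardSuc mu) \<subseteq> A"
      using card_of_ordLeq[of "Field (cardSuc mu)" A] by blast
    have "\<forall>i\<in>Field (cardSuc mu). a i \<in> P" using a(2) A unfolding antichain_def by blast
    then obtain i j u where "i \<in> Field (cardSuc mu)" "j \<in> Field (cardSuc mu)" "i \<noteq> j"
      and "u \<in> P" "le (a i) u" "le (a j) u"
      using compatible_pair_if_satisfies_star[OF assms] by blast
    thus False using A a unfolding antichain_def inj_on_def by blast
  qed
qed

end
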